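(* Let $\mu,\nu\in\mathcal{P}(\mathcal{X})$, $0<m_1\le m_2<\infty$, $K:\mathcal{X}\times\mathcal{X}\to(0,1]$ measurable with lower decay $l$, and let $(\alpha_1,\tilde\alpha_1)$, $(\alpha_2,\tilde\alpha_2)$ be pairs of tail functions (with $\mu(B_{m_1})>0$, $\nu(B_{m_1})>0$, $\alpha_1,\alpha_2>0$). For $f\in\mathcal{F}^{\mu,norm}_{\alpha_1,\tilde\alpha_1}$, $g\in\mathcal{G}^{\nu,norm}_{\alpha_2,\tilde\alpha_2}$ and $r>0$, \begin{align*} \int L_{K^\top,\nu}(g)f\,d\mu\ge\ &\frac{1+l(r)}{2}-\frac{1-l(r)}{2}\int_{B_r}|f|\,d\mu\int_{B_r}|g|\,d\nu\\ &-\int|f|\,d\mu\int_{B_r^{\mathsf c}}|g|\,d\nu-\int_{B_r^{\mathsf c}}|f|\,d\mu\int_{B_r}|g|\,d\nu, \end{align*} and $\int L_{K^\top,\nu}(g)f\,d\mu\le\int|f|\,d\mu\int|g|\,d\nu$.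
   Context: $\mathcal{X}$ is a Polish space with metric $d_{\mathcal{X}}$, $x_0$ fixed, $B_r=\{x:d_{\mathcal{X}}(x_0,x)\le r\}$, $B_r^{\mathsf c}=\mathcal{X}\setminus B_r$. A non-increasing $l:[0,\infty)\to[0,\infty)$ is a lower decay of $K$ if $\inf_{x,y\in B_r}K(x,y)\ge l(r)$ for all $r>0$. $L_{K^\top,\nu}g(x)=\int K(y,x)g(y)\,\nu(dy)$. A tail function is a non-increasing $\alpha:(0,\infty)\to[0,\infty)$ with $\lim_{r\to\infty}\alpha(r)=0$. For $\rho\in\mathcal{P}(\mathcal{X})$: $\mathcal{F}^{\rho}_{\alpha,\tilde\alpha}$ is the set of $f\in L^2(\rho)$ with $f\mathbf 1_{B_{m_2}}\ge0$ $\rho$-a.s., $\int_{B_r^{\mathsf c}}f_+\,d\rho\le\alpha(r)\int f\,d\rho$ for all $r\ge m_1$, $\int_{B_r^{\mathsf c}}f_-\,d\rho\le\tilde\alpha(r)\int f\,d\rho$ for all $r\ge m_2$; $\mathcal{G}^{\rho}_{\alpha,\tilde\alpha}=\{g\in L^2(\rho):\int fg\,d\rho\ge0\ \forall f\in\mathcal{F}^{\rho}_{\alpha,\tilde\alpha}\}$; superscript $norm$ denotes elements with $\int\cdot\,d\rho=1$. *)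

theory Defs
  imports "HOL-Analysis.Analysis" "HOL-Probability.Probability"
begin

definition Bset :: "'a::metric_space \<Rightarrow> real \<Rightarrow> 'a set" where
  "Bset x0 r = {x. dist x0 x \<le> r}"

definition lower_decay :: "'a::metric_space \<Rightarrow> ('a \<Rightarrow> 'a \<Rightarrow> real) \<Rightarrow> (real \<Rightarrow> real) \<Rightarrow> bool" where
  "lower_decay x0 K l \<longleftrightarrow>
     (\<forall>s t. 0 \<le> s \<longrightarrow> s \<le> t \<longrightarrow> l t \<le> l s) \<and>
     (\<forall>r\<ge>0. 0 \<le> l r) \<and>
     (\<forall>r>0. \<forall>x\<in>Bset x0 r. \<forall>y\<in>Bset x0 r. l r \<le> K x y)"

definition tail_function :: "(real \<Rightarrow> real) \<Rightarrow> bool" where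
  "tail_function \<alpha> \<longleftrightarrow>
     (\<forall>s t. 0 < s \<longrightarrow> s \<le> t \<longrightarrow> \<alpha> t \<le> \<alpha> s) \<and>
     (\<forall>r>0. 0 \<le> \<alpha> r) \<and>
     (\<alpha> \<longlongrightarrow> 0) at_top"

definition L2 :: "'a measure \<Rightarrow> ('a \<Rightarrow> real) \<Rightarrow> bool" where
  "L2 M f \<longleftrightarrow> f \<in> borel_measurable M \<and> integrable M (\<lambda>x. (f x)\<^sup>2)"

definition Fset :: "'a::metric_space measure \<Rightarrow> 'a \<Rightarrow> real \<Rightarrow> real \<Rightarrow> (real \<Rightarrow> real) \<Rightarrow> (real \<Rightarrow> real)
    \<Rightarrow> ('a \<Rightarrow> real) set" where
  "Fset M x0 m1 m2 \<alpha> \<alpha>' = {f. L2 M f \<and>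
     (AE x in M. indicator (Bset x0 m2) x * f x \<ge> 0) \<and>
     (\<forall>r\<ge>m1. set_lebesgue_integral M (- Bset x0 r) (\<lambda>x. max (f x) 0) \<le> \<alpha> r * integral\<^sup>L M f) \<and>
     (\<forall>r\<ge>m2. set_lebesgue_integral M (- Bset x0 r) (\<lambda>x. max (- f x) 0) \<le> \<alpha>' r * integral\<^sup>L M f)}"

definition Gset :: "'a::metric_space measure \<Rightarrow> 'a \<Rightarrow> real \<Rightarrow> real \<Rightarrow> (real \<Rightarrow> real) \<Rightarrow> (real \<Rightarrow> real)
    \<Rightarrow> ('a \<Rightarrow> real) set" where
  "Gset M x0 m1 m2 \<alpha> \<alpha>' = {g. L2 M g \<and>
     (\<forall>f\<in>Fset M x0 m1 m2 \<alpha> \<alpha>'. integral\<^sup>L M (\<lambda>x. f x * g x) \<ge> 0)}"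

definition Fnorm where
  "Fnorm M x0 m1 m2 \<alpha> \<alpha>' = {f \<in> Fset M x0 m1 m2 \<alpha> \<alpha>'. integral\<^sup>L M f = 1}"

definition Gnorm where
  "Gnorm M x0 m1 m2 \<alpha> \<alpha>' = {g \<in> Gset M x0 m1 m2 \<alpha> \<alpha>'. integral\<^sup>L M g = 1}"

definition LKT :: "('a \<Rightarrow> 'a \<Rightarrow> real) \<Rightarrow> 'a measure \<Rightarrow> ('a \<Rightarrow> real) \<Rightarrow> 'a \<Rightarrow> real" where
  "LKT K \<nu> g = (\<lambda>x. \<integral>y. K y x * g y \<partial>\<nu>)"

end

theory Submission
  imports Defs
begin

text \<open>Write \<open>c = (1 + l r) / 2\<close>. Since \<open>\<integral>g d\<nu> = 1\<close>, \<open>L g x - c = \<integral>(K y x - c) g y d\<nu>\<close>,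
  and \<open>\<bar>K y x - c\<bar>\<close> is at most \<open>(1 - l r) / 2\<close> on \<open>B\<^sub>r \<times> B\<^sub>r\<close> (where \<open>l r \<le> K \<le> 1\<close>) and at
  most 1 everywhere. This bounds \<open>\<bar>L g x - c\<bar>\<close> by a function that is constant on \<open>B\<^sub>r\<close> and on
  its complement, and since \<open>\<integral>f d\<mu> = 1\<close> the same estimate, applied to \<open>L g\<close> against \<open>f\<close>,
  gives the lower bound. The upper bound only uses \<open>\<bar>L g\<bar> \<le> \<integral>\<bar>g\<bar> d\<nu>\<close>.\<close>

lemma integrable_if_L2:
  assumes "finite_measure M" "L2 M f"
  shows "integrable M f"
  using assms finite_measure.square_integrable_imp_integrable unfolding L2_def by blast

lemma Fnorm_integrable:
  assumes "finite_measure M" "f \<in> Fnorm M x0 m1 m2 \<alpha> \<alpha>'"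
  shows "integrable M f" "integral\<^sup>L M f = 1"
  using assms integrable_if_L2 by (auto simp: Fnorm_def Fset_def)

lemma Gnorm_integrable:
  assumes "finite_measure M" "g \<in> Gnorm M x0 m1 m2 \<alpha> \<alpha>'"
  shows "integrable M g" "integral\<^sup>L M g = 1"
  using assms integrable_if_L2 by (auto simp: Gnorm_def Gset_def)

lemma lower_decay_le_one:
  assumes "lower_decay x0 K l" "0 < r" "\<And>x y. K x y \<le> 1"
  shows "l r \<le> 1"
proof -
  have "x0 \<in> Bset x0 r"
    using assms(2) by (simp add: Bset_def)
  then show ?thesis
    using assms by (meson lower_decay_def order_trans)
qed

lemma integrable_bounded_mult:
  fixes k g :: "'a \<Rightarrow> real"
  assumes "integrable M g" "k \<in> borel_measurable M" "\<And>x. x \<in> space M \<Longrightarrow> \<bar>k x\<bar> \<le> C"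
  shows "integrable M (\<lambda>x. k x * g x)"
proof (rule Bochner_Integration.integrable_bound[OF integrable_mult_right[OF integrable_abs[OF assms(1)], of C]])
  show "(\<lambda>x. k x * g x) \<in> borel_measurable M"
    using assms(1,2) by measurable
  show "AE x in M. norm (k x * g x) \<le> norm (C * \<bar>g x\<bar>)"
    by (intro AE_I2) (auto simp: abs_mult intro!: mult_right_mono order_trans[OF assms(3) abs_ge_self])
qed

lemma integral_abs_split:
  fixes f :: "'a \<Rightarrow> real"
  assumes "integrable M f" "A \<in> sets M"
  shows "(\<integral>x. \<bar>f x\<bar> \<partial>M) = (LINT x:A|M. \<bar>f x\<bar>) + (LINT x:-A|M. \<bar>f x\<bar>)"
proof -
  have "(LINT x:-A|M. \<bar>f x\<bar>) = (\<integral>x. \<bar>f x\<bar> - indicator A x * \<bar>f x\<bar> \<partial>M)"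
    unfolding set_lebesgue_integral_def
    by (rule Bochner_Integration.integral_cong) (auto simp: indicator_def)
  also have "\<dots> = (\<integral>x. \<bar>f x\<bar> \<partial>M) - (LINT x:A|M. \<bar>f x\<bar>)"
    using integrable_mult_indicator[OF assms(2) integrable_abs[OF assms(1)]] assms(1)
    unfolding set_lebesgue_integral_def by (simp add: Bochner_Integration.integral_diff)
  finally show ?thesis by simp
qed

lemma abs_integral_mult_sub_const_le:
  fixes f h :: "'a \<Rightarrow> real"
  assumes f: "integrable M f" "integral\<^sup>L M f = 1"
    and hf: "integrable M (\<lambda>x. h x * f x)" and A: "A \<in> sets M"
    and on_A: "\<And>x. x \<in> A \<Longrightarrow> \<bar>h x - c\<bar> \<le> a"
    and off_A: "\<And>x. x \<notin> A \<Longrightarrow> \<bar>h x - c\<bar> \<le> b"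
  shows "\<bar>(\<integral>x. h x * f x \<partial>M) - c\<bar> \<le> a * (LINT x:A|M. \<bar>f x\<bar>) + b * (LINT x:-A|M. \<bar>f x\<bar>)"
proof -
  define w where "w x = a * (indicator A x * \<bar>f x\<bar>) + b * (\<bar>f x\<bar> - indicator A x * \<bar>f x\<bar>)" for x
  have fA: "integrable M (\<lambda>x. indicator A x * \<bar>f x\<bar>)"
    using integrable_mult_indicator[OF A integrable_abs[OF f(1)]] by simp
  have "(\<integral>x. h x * f x \<partial>M) - c = (\<integral>x. (h x - c) * f x \<partial>M)"
    using f hf by (simp add: left_diff_distrib Bochner_Integration.integral_diff)
  also have "\<bar>\<dots>\<bar> \<le> (\<integral>x. \<bar>(h x - c) * f x\<bar> \<partial>M)"
    by (rule integral_abs_bound)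
  also have "\<dots> \<le> (\<integral>x. w x \<partial>M)"
  proof (rule integral_mono)
    show "integrable M (\<lambda>x. \<bar>(h x - c) * f x\<bar>)"
      using f hf by (simp add: left_diff_distrib)
    show "integrable M w"
      unfolding w_def using fA f(1) by simp
    show "\<bar>(h x - c) * f x\<bar> \<le> w x" for x
      using on_A[of x] off_A[of x] by (cases "x \<in> A") (auto simp: w_def abs_mult intro: mult_right_mono)
  qed
  also have "\<dots> = a * (LINT x:A|M. \<bar>f x\<bar>) + b * (LINT x:-A|M. \<bar>f x\<bar>)"
    using fA f(1) integral_abs_split[OF f(1) A]
    by (simp add: w_def set_lebesgue_integral_def Bochner_Integration.integral_diff)
  finally show ?thesis .
qed

lemma integral_mult_le_bound:
  fixes f h :: "'a \<Rightarrow> real"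
  assumes "integrable M f" "integrable M (\<lambda>x. h x * f x)" "\<And>x. \<bar>h x\<bar> \<le> C"
  shows "(\<integral>x. h x * f x \<partial>M) \<le> C * (\<integral>x. \<bar>f x\<bar> \<partial>M)"
proof -
  have "(\<integral>x. h x * f x \<partial>M) \<le> (\<integral>x. C * \<bar>f x\<bar> \<partial>M)"
  proof (rule integral_mono)
    show "h x * f x \<le> C * \<bar>f x\<bar>" for x
      using mult_right_mono[OF assms(3)[of x] abs_ge_zero[of "f x"]] by (metis abs_ge_self abs_mult order_trans)
  qed (use assms(1,2) in simp_all)
  then show ?thesis by simp
qed

lemma borel_measurable_kernel_section:
  fixes K :: "'a::topological_space \<Rightarrow> 'b::topological_space \<Rightarrow> real"
  assumes "sets \<nu> = sets borel" "(\<lambda>(x, y). K x y) \<in> borel_measurable (borel \<Otimes>\<^sub>M borel)"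
  shows "(\<lambda>x. K x y) \<in> borel_measurable \<nu>"
proof -
  have "(\<lambda>x. (x, y)) \<in> measurable borel (borel \<Otimes>\<^sub>M (borel :: 'b measure))"
    by (simp add: measurable_Pair2')
  from measurable_compose[OF this assms(2)] show ?thesis
    by (simp add: measurable_cong_sets[OF assms(1) refl])
qed

lemma borel_measurable_LKT:
  fixes K :: "'a::topological_space \<Rightarrow> 'a \<Rightarrow> real"
  assumes "sigma_finite_measure \<nu>" "sets \<mu> = sets borel" "sets \<nu> = sets borel"
    and "(\<lambda>(x, y). K x y) \<in> borel_measurable (borel \<Otimes>\<^sub>M borel)"
    and "g \<in> borel_measurable \<nu>"
  shows "LKT K \<nu> g \<in> borel_measurable \<mu>"
proof -
  have "(\<lambda>(x, y). K x y) \<in> borel_measurable (\<nu> \<Otimes>\<^sub>M \<mu>)"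
    using assms(4) by (simp add: measurable_cong_sets[OF sets_pair_measure_cong[OF assms(3,2)] refl])
  then have "(\<lambda>(x, y). K y x * g y) \<in> borel_measurable (\<mu> \<Otimes>\<^sub>M \<nu>)"
    using assms(5) by measurable
  then show ?thesis
    unfolding LKT_def by (rule sigma_finite_measure.borel_measurable_lebesgue_integral[OF assms(1)])
qed

lemma abs_LKT_le:
  fixes K :: "'a \<Rightarrow> 'a \<Rightarrow> real"
  assumes "integrable \<nu> g" "(\<lambda>y. K y x) \<in> borel_measurable \<nu>" "\<And>y. \<bar>K y x\<bar> \<le> 1"
  shows "\<bar>LKT K \<nu> g x\<bar> \<le> (\<integral>y. \<bar>g y\<bar> \<partial>\<nu>)"
proof -
  have "\<bar>LKT K \<nu> g x\<bar> \<le> (\<integral>y. \<bar>K y x * g y\<bar> \<partial>\<nu>)"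
    unfolding LKT_def by (rule integral_abs_bound)
  also have "\<dots> \<le> (\<integral>y. \<bar>g y\<bar> \<partial>\<nu>)"
  proof (intro integral_mono integrable_abs assms(1))
    show "integrable \<nu> (\<lambda>y. K y x * g y)"
      using assms by (intro integrable_bounded_mult[of _ _ _ 1]) auto
  qed (simp add: abs_mult mult_left_le_one_le assms(3))
  finally show ?thesis .
qed

lemma abs_LKT_sub_midpoint_le:
  fixes K :: "'a \<Rightarrow> 'a \<Rightarrow> real"
  assumes g: "integrable \<nu> g" "integral\<^sup>L \<nu> g = 1"
    and K: "(\<lambda>y. K y x) \<in> borel_measurable \<nu>" "\<And>y. 0 \<le> K y x \<and> K y x \<le> 1"
    and B: "B \<in> sets \<nu>" and l: "0 \<le> l" "l \<le> 1" "\<And>y. x \<in> B \<Longrightarrow> y \<in> B \<Longrightarrow> l \<le> K y x"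
  shows "\<bar>LKT K \<nu> g x - (1 + l) / 2\<bar>
           \<le> (if x \<in> B then (1 - l) / 2 else 1) * (LINT y:B|\<nu>. \<bar>g y\<bar>) + (LINT y:-B|\<nu>. \<bar>g y\<bar>)"
proof -
  have "integrable \<nu> (\<lambda>y. K y x * g y)"
    using K by (intro integrable_bounded_mult[OF g(1) K(1), of 1]) auto
  moreover have "\<bar>K y x - (1 + l) / 2\<bar> \<le> (if x \<in> B then (1 - l) / 2 else 1)" if "y \<in> B" for y
    using K(2)[of y] l l(3)[OF _ that] by (auto simp: abs_le_iff field_simps)
  moreover have "\<bar>K y x - (1 + l) / 2\<bar> \<le> 1" for y
    using K(2)[of y] l by (auto simp: abs_le_iff field_simps)
  ultimately show ?thesis
    using abs_integral_mult_sub_const_le[OF g _ B, of "\<lambda>y. K y x" "(1 + l) / 2" _ 1]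
    unfolding LKT_def by simp
qed

lemma abs_integral_LKT_mult_sub_midpoint_le:
  fixes K :: "'a \<Rightarrow> 'a \<Rightarrow> real"
  assumes f: "integrable \<mu> f" "integral\<^sup>L \<mu> f = 1" and g: "integrable \<nu> g" "integral\<^sup>L \<nu> g = 1"
    and hf: "integrable \<mu> (\<lambda>x. LKT K \<nu> g x * f x)"
    and K: "\<And>x. (\<lambda>y. K y x) \<in> borel_measurable \<nu>" "\<And>x y. 0 \<le> K y x \<and> K y x \<le> 1"
    and B: "B \<in> sets \<mu>" "B \<in> sets \<nu>"
    and l: "0 \<le> l" "l \<le> 1" "\<And>x y. x \<in> B \<Longrightarrow> y \<in> B \<Longrightarrow> l \<le> K y x"
  shows "\<bar>(\<integral>x. LKT K \<nu> g x * f x \<partial>\<mu>) - (1 + l) / 2\<bar>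
           \<le> ((1 - l) / 2 * (LINT y:B|\<nu>. \<bar>g y\<bar>) + (LINT y:-B|\<nu>. \<bar>g y\<bar>)) * (LINT x:B|\<mu>. \<bar>f x\<bar>)
             + (\<integral>y. \<bar>g y\<bar> \<partial>\<nu>) * (LINT x:-B|\<mu>. \<bar>f x\<bar>)"
proof (rule abs_integral_mult_sub_const_le[OF f hf B(1)])
  have dev: "\<bar>LKT K \<nu> g x - (1 + l) / 2\<bar>
      \<le> (if x \<in> B then (1 - l) / 2 else 1) * (LINT y:B|\<nu>. \<bar>g y\<bar>) + (LINT y:-B|\<nu>. \<bar>g y\<bar>)" for x
    by (rule abs_LKT_sub_midpoint_le[where K = K, OF g K(1) K(2) B(2) l(1,2) l(3)])
  show "\<bar>LKT K \<nu> g x - (1 + l) / 2\<bar> \<le> (1 - l) / 2 * (LINT y:B|\<nu>. \<bar>g y\<bar>) + (LINT y:-B|\<nu>. \<bar>g y\<bar>)"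
    if "x \<in> B" for x
    using dev[of x] that by simp
  show "\<bar>LKT K \<nu> g x - (1 + l) / 2\<bar> \<le> (\<integral>y. \<bar>g y\<bar> \<partial>\<nu>)" if "x \<notin> B" for x
    using dev[of x] that integral_abs_split[OF g(1) B(2)] by simp
qed

theorem lemma4p4:
  fixes \<mu> \<nu> :: "'a::polish_space measure" and x0 :: 'a
    and K :: "'a \<Rightarrow> 'a \<Rightarrow> real" and l \<alpha>1 \<alpha>1' \<alpha>2 \<alpha>2' :: "real \<Rightarrow> real"
    and m1 m2 r :: real and f g :: "'a \<Rightarrow> real"
  assumes "prob_space \<mu>" and "prob_space \<nu>"
    and "sets \<mu> = sets borel" and "sets \<nu> = sets borel"
    and "0 < m1" and "m1 \<le> m2"
    and "(\<lambda>(x, y). K x y) \<in> borel_measurable (borel \<Otimes>\<^sub>M borel)"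
    and "\<And>x y. 0 < K x y \<and> K x y \<le> 1"
    and "lower_decay x0 K l"
    and "tail_function \<alpha>1" and "tail_function \<alpha>1'"
    and "tail_function \<alpha>2" and "tail_function \<alpha>2'"
    and "measure \<mu> (Bset x0 m1) > 0" and "measure \<nu> (Bset x0 m1) > 0"
    and "\<And>s. 0 < s \<Longrightarrow> 0 < \<alpha>1 s" and "\<And>s. 0 < s \<Longrightarrow> 0 < \<alpha>2 s"
    and "f \<in> Fnorm \<mu> x0 m1 m2 \<alpha>1 \<alpha>1'"
    and "g \<in> Gnorm \<nu> x0 m1 m2 \<alpha>2 \<alpha>2'"
    and "0 < r"
  shows "(\<integral>x. LKT K \<nu> g x * f x \<partial>\<mu>) \<ge>
           ((1 + l r) / 2
           - (1 - l r) / 2 * set_lebesgue_integral \<mu> (Bset x0 r) (\<lambda>x. \<bar>f x\<bar>)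
                           * set_lebesgue_integral \<nu> (Bset x0 r) (\<lambda>x. \<bar>g x\<bar>)
           - (\<integral>x. \<bar>f x\<bar> \<partial>\<mu>) * set_lebesgue_integral \<nu> (- Bset x0 r) (\<lambda>x. \<bar>g x\<bar>)
           - set_lebesgue_integral \<mu> (- Bset x0 r) (\<lambda>x. \<bar>f x\<bar>)
               * set_lebesgue_integral \<nu> (Bset x0 r) (\<lambda>x. \<bar>g x\<bar>))
         \<and> (\<integral>x. LKT K \<nu> g x * f x \<partial>\<mu>) \<le> (\<integral>x. \<bar>f x\<bar> \<partial>\<mu>) * (\<integral>x. \<bar>g x\<bar> \<partial>\<nu>)"
proof -
  interpret \<mu>: prob_space \<mu> by fact
  interpret \<nu>: prob_space \<nu> by fact
  define B where "B = Bset x0 r"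
  have B: "B \<in> sets \<mu>" "B \<in> sets \<nu>"
    using assms(3,4) by (simp_all add: B_def Bset_def cball_def[symmetric])
  have f: "integrable \<mu> f" "integral\<^sup>L \<mu> f = 1"
    using Fnorm_integrable[OF \<mu>.finite_measure_axioms assms(18)] by simp_all
  have g: "integrable \<nu> g" "integral\<^sup>L \<nu> g = 1"
    using Gnorm_integrable[OF \<nu>.finite_measure_axioms assms(19)] by simp_all
  have K: "(\<lambda>y. K y x) \<in> borel_measurable \<nu>" "0 \<le> K y x \<and> K y x \<le> 1" for x y
    using borel_measurable_kernel_section[OF assms(4,7)] assms(8)[of y x] by auto
  have l: "0 \<le> l r" "l r \<le> 1" "\<And>x y. x \<in> B \<Longrightarrow> y \<in> B \<Longrightarrow> l r \<le> K y x"
    using assms(9,20) lower_decay_le_one[OF assms(9,20)] assms(8)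
    by (auto simp: lower_decay_def B_def)
  have h_bound: "\<bar>LKT K \<nu> g x\<bar> \<le> (\<integral>y. \<bar>g y\<bar> \<partial>\<nu>)" for x
    using abs_LKT_le[OF g(1) K(1)] K(2) by (simp add: abs_le_iff)
  have hf: "integrable \<mu> (\<lambda>x. LKT K \<nu> g x * f x)"
    using borel_measurable_LKT[OF \<nu>.sigma_finite_measure_axioms assms(3,4,7)] g(1) h_bound
    by (intro integrable_bounded_mult[OF f(1)]) auto
  show ?thesis
    using abs_integral_LKT_mult_sub_midpoint_le[OF f g hf K B l]
      integral_mult_le_bound[OF f(1) hf h_bound]
      integral_abs_split[OF f(1) B(1)] integral_abs_split[OF g(1) B(2)]
    unfolding B_def by (simp add: algebra_simps abs_le_iff)
qed

end
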